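(* Let $(M,\le)$ be a finite modular lattice and $Q$ a saturated cover on $M$. If $x\le y\le w\le z$ in $M$ and $x\,\langle Q\rangle\,z$, then $y\,\langle Q\rangle\,w$.
   Context: A lattice $M$ is modular if $a\le b$ implies $a\vee(x\wedge b)=(a\vee x)\wedge b$. A transfer system on a finite lattice $(P,\le)$ is a partial order $R$ refining $\le$ closed under restriction: $x\,R\,z$ and $y\le z$ imply $(x\wedge y)\,R\,y$. For a set $Q$ of pairs $(x,y)$ with $x\le y$, $\langle Q\rangle$ is the intersection of all transfer systems containing $Q$. A covering diamond is a quadruple $x,y,x\wedge y,x\vee y$ with $x\ne y$ such that $x\vee y$ covers $x$ and $y$ and both cover $x\wedge y$. A saturated cover on $M$ is a set $Q$ of covering relations of $M$ such that (1) for all $x,y$, if $x\,Q\,(x\vee y)$ then $(x\wedge y)\,Q\,y$; (2) for every covering diamond, if three of its four covering relations lie in $Q$, so does the fourth. *)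

theory Defs
  imports Main
begin

definition modular_lattice :: "'a::lattice itself \<Rightarrow> bool" where
  "modular_lattice _ \<longleftrightarrow>
     (\<forall>a b x :: 'a. a \<le> b \<longrightarrow> sup a (inf x b) = inf (sup a x) b)"

definition transfer_system :: "('a::lattice \<times> 'a) set \<Rightarrow> bool" where
  "transfer_system R \<longleftrightarrow>
     (\<forall>x y. (x, y) \<in> R \<longrightarrow> x \<le> y) \<and>
     (\<forall>x. (x, x) \<in> R) \<and>
     (\<forall>x y. (x, y) \<in> R \<and> (y, x) \<in> R \<longrightarrow> x = y) \<and>
     (\<forall>x y z. (x, y) \<in> R \<and> (y, z) \<in> R \<longrightarrow> (x, z) \<in> R) \<and>
     (\<forall>x y z. (x, z) \<in> R \<and> y \<le> z \<longrightarrow> (inf x y, y) \<in> R)"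

definition gen_transfer :: "('a::lattice \<times> 'a) set \<Rightarrow> ('a \<times> 'a) set" where
  "gen_transfer Q = \<Inter> {R. transfer_system R \<and> Q \<subseteq> R}"

definition covers :: "'a::order \<Rightarrow> 'a \<Rightarrow> bool" where
  "covers x y \<longleftrightarrow> x < y \<and> \<not> (\<exists>z. x < z \<and> z < y)"

definition covering_diamond :: "'a::lattice \<Rightarrow> 'a \<Rightarrow> bool" where
  "covering_diamond x y \<longleftrightarrow> x \<noteq> y \<and>
     covers x (sup x y) \<and> covers y (sup x y) \<and>
     covers (inf x y) x \<and> covers (inf x y) y"

definition saturated_cover :: "('a::lattice \<times> 'a) set \<Rightarrow> bool" where
  "saturated_cover Q \<longleftrightarrow>
     (\<forall>x y. (x, y) \<in> Q \<longrightarrow> covers x y) \<and>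
     (\<forall>x y. (x, sup x y) \<in> Q \<longrightarrow> (inf x y, y) \<in> Q) \<and>
     (\<forall>x y. covering_diamond x y \<longrightarrow>
        (let e1 = (inf x y, x) \<in> Q; e2 = (inf x y, y) \<in> Q;
             e3 = (x, sup x y) \<in> Q; e4 = (y, sup x y) \<in> Q
         in (e1 \<and> e2 \<and> e3 \<longrightarrow> e4) \<and> (e1 \<and> e2 \<and> e4 \<longrightarrow> e3) \<and>
            (e1 \<and> e3 \<and> e4 \<longrightarrow> e2) \<and> (e2 \<and> e3 \<and> e4 \<longrightarrow> e1)))"

end

theory Submission
  imports Defs
begin

text \<open>
  In a finite modular lattice with \<open>Q\<close> saturated, \<open>\<langle>Q\<rangle>\<close> consists exactly of the pairs
  \<open>x \<le> z\<close> such that every cover inside the interval \<open>[x, z]\<close> lies in \<open>Q\<close>; this property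
  passes trivially to every subinterval \<open>[y, w]\<close>. One inclusion holds because \<open>\<langle>Q\<rangle>\<close> is
  transitive and every interval of a finite lattice is a chain of covers. For the other, these pairs
  form a transfer system. Restriction: a cover \<open>u \<prec> v\<close> with \<open>v \<sqinter> y \<le> u\<close> is the
  restriction of the cover \<open>u \<squnion> y \<prec> v \<squnion> y\<close>. Transitivity: a cover \<open>a \<prec> b\<close> of
  \<open>[x, z]\<close> not of that form (for the middle element \<open>y\<close>) is the top rung of a ladder of
  covering diamonds over the cover \<open>a \<sqinter> y \<prec> b \<sqinter> y\<close> of \<open>[x, y]\<close>, and the diamond
  axiom carries membership in \<open>Q\<close> up the ladder.
\<close>

lemma modular_lattice_law:
  assumes "modular_lattice TYPE('a::lattice)" and "(a::'a) \<le> b"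
  shows "sup a (inf x b) = inf (sup a x) b"
  using assms unfolding modular_lattice_def by blast

lemma covers_le: "covers a b \<Longrightarrow> a \<le> b"
  by (simp add: covers_def less_imp_le)

lemma covers_cases:
  assumes "covers a b" and "a \<le> t" and "t \<le> b"
  shows "t = a \<or> t = b"
  using assms unfolding covers_def by (metis order.not_eq_order_implies_strict)

lemma modular_covers_sup:
  fixes u v y :: "'a::lattice"
  assumes M: "modular_lattice TYPE('a)" and uv: "covers u v" and nle: "\<not> v \<le> sup u y"
  shows "covers (sup u y) (sup v y)"
proof -
  have "u \<le> v" using uv by (rule covers_le)
  then have less: "sup u y < sup v y"
    using nle by (metis le_sup_iff order.strict_iff_order sup.cobounded1 sup_mono order_refl)
  have "\<not> (sup u y < t \<and> t < sup v y)" for t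
  proof
    assume t: "sup u y < t \<and> t < sup v y"
    have "u \<le> inf t v" using t \<open>u \<le> v\<close> by (meson le_inf_iff le_sup_iff less_imp_le order_refl)
    then have "inf t v = u \<or> inf t v = v" using covers_cases[OF uv] by simp
    then show False
    proof
      assume "inf t v = u"
      have "sup y (inf v t) = inf (sup y v) t"
        using modular_lattice_law[OF M, of y t v] t by (meson le_sup_iff less_imp_le)
      then have "sup y u = t" using \<open>inf t v = u\<close> t
        by (metis inf.absorb2 inf_commute less_imp_le sup_commute)
      then show False using t by (simp add: sup_commute)
    next
      assume "inf t v = v"
      then have "sup v y \<le> t" using t by (metis inf.absorb_iff2 le_sup_iff less_imp_le)
      then show False using t by (meson order.strict_trans2 order.irrefl)
    qed
  qed
  then show ?thesis using less by (auto simp: covers_def)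
qed

lemma modular_covers_inf:
  fixes a b y :: "'a::lattice"
  assumes M: "modular_lattice TYPE('a)" and ab: "covers a b" and nle: "\<not> inf b y \<le> a"
  shows "covers (inf a y) (inf b y)"
proof -
  have "a \<le> b" using ab by (rule covers_le)
  then have "inf a y \<le> inf b y" by (meson inf_mono order_refl)
  moreover have "inf a y \<noteq> inf b y" using nle by (metis inf.cobounded1)
  ultimately have less: "inf a y < inf b y" by (metis order.not_eq_order_implies_strict)
  have "\<not> (inf a y < t \<and> t < inf b y)" for t
  proof
    assume t: "inf a y < t \<and> t < inf b y"
    have "sup a t \<le> b" using t \<open>a \<le> b\<close> by (meson le_inf_iff le_supI less_imp_le)
    then have "sup a t = a \<or> sup a t = b" using covers_cases[OF ab] by simp
    then show False
    proof
      assume "sup a t = a"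
      then have "t \<le> inf a y" using t by (metis le_inf_iff less_imp_le sup.cobounded2)
      then show False using t by (meson less_le_not_le)
    next
      assume "sup a t = b"
      have "sup t (inf a (inf b y)) = inf (sup t a) (inf b y)"
        using modular_lattice_law[OF M less_imp_le, of t "inf b y" a] t by blast
      moreover have "inf a (inf b y) = inf a y" using \<open>a \<le> b\<close> by (metis inf.absorb1 inf.assoc)
      ultimately have "t = inf b y" using t \<open>sup a t = b\<close>
        by (simp add: sup_commute sup.absorb1 less_imp_le)
      then show False using t by simp
    qed
  qed
  then show ?thesis using less by (auto simp: covers_def)
qed

lemma sup_inf_eq_of_covers:
  fixes a b y :: "'a::lattice"
  assumes ab: "covers a b" and nle: "\<not> inf b y \<le> a"
  shows "sup a (inf b y) = b"
proof -
  have "a \<le> b" using ab by (rule covers_le)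
  then have "sup a (inf b y) = a \<or> sup a (inf b y) = b"
    using covers_cases[OF ab] by (simp add: le_infI1)
  moreover have "sup a (inf b y) \<noteq> a" using nle by (metis sup.cobounded2)
  ultimately show ?thesis by simp
qed

lemma modular_covers_sup_disjoint:
  fixes c d e :: "'a::lattice"
  assumes M: "modular_lattice TYPE('a)" and cd: "covers c d" and ce: "c \<le> e" and ed: "inf e d = c"
  shows "covers e (sup e d)"
proof -
  have "\<not> d \<le> sup c e" using cd ce ed by (auto simp: covers_def sup.absorb2 inf.absorb2)
  then have "covers (sup c e) (sup d e)" by (rule modular_covers_sup[OF M cd])
  moreover have "sup c e = e" "sup d e = sup e d" using ce by (simp_all add: sup.absorb2 sup_commute)
  ultimately show ?thesis by simp
qed

lemma modular_covering_diamond: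
  fixes c d e e' :: "'a::lattice"
  assumes M: "modular_lattice TYPE('a)" and cd: "covers c d" and e'e: "covers e' e"
    and ce': "c \<le> e'" and ed: "inf e d = c"
  shows "covering_diamond e (sup e' d)"
    and "inf e (sup e' d) = e'"
    and "sup e (sup e' d) = sup e d"
proof -
  have "e' \<le> e" using e'e by (rule covers_le)
  have "sup e' (inf d e) = inf (sup e' d) e" using modular_lattice_law[OF M \<open>e' \<le> e\<close>] .
  then show meet: "inf e (sup e' d) = e'"
    using ed ce' by (simp add: inf_commute sup.absorb1)
  show join: "sup e (sup e' d) = sup e d"
    using \<open>e' \<le> e\<close> by (metis sup.absorb1 sup.assoc)
  have e'd: "inf e' d = c"
  proof (rule order.antisym)
    show "inf e' d \<le> c" using ed \<open>e' \<le> e\<close> by (metis inf_mono order_refl)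
    show "c \<le> inf e' d" using ce' covers_le[OF cd] by simp
  qed
  have "\<not> e \<le> sup e' d"
  proof
    assume "e \<le> sup e' d"
    then have "e' = e" using meet by (simp add: inf.absorb1)
    then show False using e'e by (simp add: covers_def)
  qed
  then have "covers (sup e' d) (sup e d)" using modular_covers_sup[OF M e'e] by simp
  moreover have "e \<noteq> sup e' d" using ed cd by (auto simp: covers_def inf.absorb2)
  moreover have "covers e (sup e d)"
    using modular_covers_sup_disjoint[OF M cd _ ed] ce' \<open>e' \<le> e\<close> by simp
  moreover have "covers e' (sup e' d)" using modular_covers_sup_disjoint[OF M cd ce' e'd] .
  ultimately show "covering_diamond e (sup e' d)"
    unfolding covering_diamond_def meet join using e'e by simp
qed

lemma wfp_less_finite: "wfp ((<) :: 'a::{order,finite} \<Rightarrow> 'a \<Rightarrow> bool)"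
  by (rule strict_partial_order_wfp_on_finite_set) (auto simp: transp_on_def asymp_on_def)

lemma wfp_greater_finite: "wfp ((>) :: 'a::{order,finite} \<Rightarrow> 'a \<Rightarrow> bool)"
  by (rule strict_partial_order_wfp_on_finite_set) (auto simp: transp_on_def asymp_on_def)

lemma finite_covers_below:
  fixes c e :: "'a::{order,finite}"
  assumes "c < e"
  obtains e' where "c \<le> e'" and "covers e' e"
proof -
  obtain e' where "c \<le> e'" "e' < e" and max: "\<And>u. c \<le> u \<Longrightarrow> u < e \<Longrightarrow> e' \<le> u \<Longrightarrow> e' = u"
    using finite_has_maximal2[of "{u. c \<le> u \<and> u < e}" c] assms by auto
  moreover have "\<not> (e' < t \<and> t < e)" for t
    using max[of t] \<open>c \<le> e'\<close> by (metis order.strict_iff_order order.trans)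
  ultimately show ?thesis using that unfolding covers_def by blast
qed

lemma finite_covers_above:
  fixes x z :: "'a::{order,finite}"
  assumes "x < z"
  obtains u where "covers x u" and "u \<le> z"
proof -
  obtain u where "x < u" "u \<le> z" and min: "\<And>t. x < t \<Longrightarrow> t \<le> z \<Longrightarrow> t \<le> u \<Longrightarrow> u = t"
    using finite_has_minimal2[of "{u. x < u \<and> u \<le> z}" z] assms by auto
  moreover have "\<not> (x < t \<and> t < u)" for t
    using min[of t] \<open>u \<le> z\<close> by (metis order.strict_iff_order order.trans)
  ultimately show ?thesis using that unfolding covers_def by blast
qed

lemma saturated_cover_covers: "saturated_cover Q \<Longrightarrow> (a, b) \<in> Q \<Longrightarrow> covers a b"
  unfolding saturated_cover_def by blast

lemma saturated_cover_restrict: "saturated_cover Q \<Longrightarrow> (x, sup x y) \<in> Q \<Longrightarrow> (inf x y, y) \<in> Q"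
  unfolding saturated_cover_def by blast

lemma saturated_cover_diamond:
  assumes "saturated_cover Q" and "covering_diamond x y"
    and "(inf x y, x) \<in> Q" and "(inf x y, y) \<in> Q" and "(y, sup x y) \<in> Q"
  shows "(x, sup x y) \<in> Q"
  using assms unfolding saturated_cover_def Let_def by blast

definition interval_covers_in :: "('a::order \<times> 'a) set \<Rightarrow> 'a \<Rightarrow> 'a \<Rightarrow> bool" where
  "interval_covers_in Q x z \<longleftrightarrow> (\<forall>a b. x \<le> a \<longrightarrow> b \<le> z \<longrightarrow> covers a b \<longrightarrow> (a, b) \<in> Q)"

lemma interval_covers_in_mono:
  "interval_covers_in Q x z \<Longrightarrow> x \<le> y \<Longrightarrow> w \<le> z \<Longrightarrow> interval_covers_in Q y w"
  unfolding interval_covers_in_def by (meson order_trans)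

lemma saturated_cover_lower:
  fixes u v y z :: "'a::lattice"
  assumes M: "modular_lattice TYPE('a)" and S: "saturated_cover Q"
    and full: "interval_covers_in Q y z" and "y \<le> z"
    and uv: "covers u v" and "v \<le> z" and vy: "inf v y \<le> u"
  shows "(u, v) \<in> Q"
proof -
  have "u \<le> v" using uv by (rule covers_le)
  then have meet: "inf (sup u y) v = u"
    using modular_lattice_law[OF M, of u v y] vy by (simp add: inf_commute sup.absorb1)
  have "\<not> v \<le> sup u y" using meet uv by (auto simp: covers_def inf.absorb2)
  then have "covers (sup u y) (sup v y)" by (rule modular_covers_sup[OF M uv])
  moreover have "sup v y \<le> z" using \<open>v \<le> z\<close> \<open>y \<le> z\<close> by simp
  ultimately have "(sup u y, sup v y) \<in> Q" using full by (simp add: interval_covers_in_def)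
  moreover have "sup (sup u y) v = sup v y"
    using \<open>u \<le> v\<close> by (metis sup.absorb2 sup.assoc sup_commute)
  ultimately have "(inf (sup u y) v, v) \<in> Q" using saturated_cover_restrict[OF S] by simp
  then show ?thesis using meet by simp
qed

lemma saturated_cover_ladder:
  fixes a c d y :: "'a::{lattice,finite}"
  assumes M: "modular_lattice TYPE('a)" and S: "saturated_cover Q"
    and cd: "covers c d" and "(c, d) \<in> Q"
    and "c \<le> a" and ad: "inf a d = c" and ay: "inf a y = c" and ady: "inf (sup a d) y = d"
    and lower: "\<And>u v. covers u v \<Longrightarrow> v \<le> sup a d \<Longrightarrow> inf v y \<le> u \<Longrightarrow> (u, v) \<in> Q"
  shows "c \<le> e \<Longrightarrow> e \<le> a \<Longrightarrow> (e, sup e d) \<in> Q"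
proof (induction e rule: wfp_induct_rule[OF wfp_less_finite])
  case (1 e)
  show ?case
  proof (cases "e = c")
    case True
    then show ?thesis using \<open>(c, d) \<in> Q\<close> covers_le[OF cd] by (simp add: sup.absorb2)
  next
    case False
    then obtain e' where ce': "c \<le> e'" and e'e: "covers e' e"
      using finite_covers_below "1.prems"(1) by (metis order.not_eq_order_implies_strict)
    have "e' < e" using e'e by (simp add: covers_def)
    have ed: "inf e d = c"
    proof (rule order.antisym)
      show "inf e d \<le> c" using "1.prems"(2) ad by (metis inf_mono order_refl)
      show "c \<le> inf e d" using "1.prems"(1) covers_le[OF cd] by simp
    qed
    note diamond = modular_covering_diamond[OF M cd e'e ce' ed]
    have "(e', sup e' d) \<in> Q" using "1.IH"[OF \<open>e' < e\<close>] ce' \<open>e' < e\<close> "1.prems" by simp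
    moreover have "(e', e) \<in> Q"
    proof (rule lower[OF e'e])
      show "e \<le> sup a d" using "1.prems"(2) by (rule le_supI1)
      have "inf e y \<le> inf a y" using "1.prems"(2) by (meson inf_mono order_refl)
      then show "inf e y \<le> e'" using ay ce' by simp
    qed
    moreover have "(sup e' d, sup e d) \<in> Q"
    proof (rule lower)
      show "covers (sup e' d) (sup e d)"
        using diamond unfolding covering_diamond_def by simp
      show "sup e d \<le> sup a d" using "1.prems"(2) by (meson sup_mono order_refl)
      have "inf (sup e d) y \<le> inf (sup a d) y" using "1.prems"(2) by (meson inf_mono sup_mono order_refl)
      then show "inf (sup e d) y \<le> sup e' d" using ady by (simp add: le_supI2)
    qed
    ultimately show ?thesis
      using saturated_cover_diamond[OF S diamond(1)] diamond(2,3) by simp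
  qed
qed

lemma interval_covers_in_trans:
  fixes x y z :: "'a::{lattice,finite}"
  assumes M: "modular_lattice TYPE('a)" and S: "saturated_cover Q"
    and xy_full: "interval_covers_in Q x y" and yz_full: "interval_covers_in Q y z"
    and "x \<le> y" and "y \<le> z"
  shows "interval_covers_in Q x z"
  unfolding interval_covers_in_def
proof (intro allI impI)
  fix a b assume "x \<le> a" and "b \<le> z" and ab: "covers a b"
  have lower: "\<And>u v. covers u v \<Longrightarrow> v \<le> b \<Longrightarrow> inf v y \<le> u \<Longrightarrow> (u, v) \<in> Q"
    using saturated_cover_lower[OF M S yz_full \<open>y \<le> z\<close>] \<open>b \<le> z\<close> by (meson order.trans)
  show "(a, b) \<in> Q"
  proof (cases "inf b y \<le> a")
    case True
    then show ?thesis using lower[OF ab] by simp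
  next
    case False
    define c d where "c = inf a y" and "d = inf b y"
    have "a \<le> b" using ab by (rule covers_le)
    have cd: "covers c d" unfolding c_def d_def using modular_covers_inf[OF M ab False] .
    have "(c, d) \<in> Q"
      using xy_full cd \<open>x \<le> a\<close> \<open>x \<le> y\<close> by (simp add: interval_covers_in_def c_def d_def)
    have ad: "sup a d = b" unfolding d_def using sup_inf_eq_of_covers[OF ab False] .
    have "inf a d = c"
      unfolding c_def d_def using \<open>a \<le> b\<close> by (metis inf.absorb1 inf.assoc)
    have "(a, sup a d) \<in> Q"
    proof (rule saturated_cover_ladder[OF M S cd \<open>(c, d) \<in> Q\<close> _ \<open>inf a d = c\<close>])
      show "c \<le> a" "inf a y = c" "c \<le> a" "a \<le> a" by (simp_all add: c_def)
      show "inf (sup a d) y = d" unfolding ad by (simp add: d_def)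
      show "(u, v) \<in> Q" if "covers u v" "v \<le> sup a d" "inf v y \<le> u" for u v
        using lower that ad by simp
    qed
    then show "(a, b) \<in> Q" using ad by simp
  qed
qed

lemma interval_covers_in_inf:
  fixes x y z :: "'a::lattice"
  assumes M: "modular_lattice TYPE('a)" and S: "saturated_cover Q"
    and full: "interval_covers_in Q x z" and "x \<le> z" and "y \<le> z"
  shows "interval_covers_in Q (inf x y) y"
  unfolding interval_covers_in_def
proof (intro allI impI)
  fix a b assume "inf x y \<le> a" and "b \<le> y" and "covers a b"
  moreover have "inf b x \<le> a"
    using \<open>inf x y \<le> a\<close> \<open>b \<le> y\<close> by (metis inf_commute inf_mono order.trans order_refl)
  ultimately show "(a, b) \<in> Q"
    using saturated_cover_lower[OF M S full \<open>x \<le> z\<close>] \<open>y \<le> z\<close> by (meson order.trans)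
qed

definition interval_cover_relation :: "('a::order \<times> 'a) set \<Rightarrow> ('a \<times> 'a) set" where
  "interval_cover_relation Q = {(x, z). x \<le> z \<and> interval_covers_in Q x z}"

lemma interval_covers_in_refl: "interval_covers_in Q x x"
  unfolding interval_covers_in_def covers_def by (meson order.trans order.strict_iff_not)

lemma transfer_system_interval_cover_relation:
  fixes Q :: "('a::{lattice,finite} \<times> 'a) set"
  assumes M: "modular_lattice TYPE('a)" and S: "saturated_cover Q"
  shows "transfer_system (interval_cover_relation Q)"
  unfolding transfer_system_def interval_cover_relation_def
  using interval_covers_in_refl interval_covers_in_trans[OF M S] interval_covers_in_inf[OF M S]
  by (auto intro: order.trans order.antisym)

lemma subset_interval_cover_relation:
  assumes "saturated_cover Q"
  shows "Q \<subseteq> interval_cover_relation Q"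
proof clarify
  fix x z assume "(x, z) \<in> Q"
  then have xz: "covers x z" by (rule saturated_cover_covers[OF assms])
  have "a = x \<and> b = z" if "x \<le> a" "b \<le> z" "covers a b" for a b
    using that covers_cases[OF xz, of a] covers_cases[OF xz, of b]
    unfolding covers_def by (metis order.strict_trans1 order.strict_trans2 order.irrefl less_imp_le)
  then have "interval_covers_in Q x z" using \<open>(x, z) \<in> Q\<close> by (auto simp: interval_covers_in_def)
  then show "(x, z) \<in> interval_cover_relation Q"
    using covers_le[OF xz] by (simp add: interval_cover_relation_def)
qed

lemma gen_transfer_least: "transfer_system R \<Longrightarrow> Q \<subseteq> R \<Longrightarrow> gen_transfer Q \<subseteq> R"
  unfolding gen_transfer_def by blast

lemma transfer_system_refl: "transfer_system R \<Longrightarrow> (x, x) \<in> R"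
  by (simp add: transfer_system_def)

lemma transfer_system_trans: "transfer_system R \<Longrightarrow> (x, y) \<in> R \<Longrightarrow> (y, z) \<in> R \<Longrightarrow> (x, z) \<in> R"
  unfolding transfer_system_def by meson

lemma gen_transfer_refl: "(x, x) \<in> gen_transfer Q"
  unfolding gen_transfer_def by (blast intro: transfer_system_refl)

lemma gen_transfer_trans: "(x, y) \<in> gen_transfer Q \<Longrightarrow> (y, z) \<in> gen_transfer Q \<Longrightarrow> (x, z) \<in> gen_transfer Q"
  unfolding gen_transfer_def by (blast intro: transfer_system_trans)

lemma subset_gen_transfer: "Q \<subseteq> gen_transfer Q"
  unfolding gen_transfer_def by blast

lemma interval_cover_relation_subset_gen_transfer:
  fixes Q :: "('a::{lattice,finite} \<times> 'a) set"
  shows "interval_cover_relation Q \<subseteq> gen_transfer Q"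
proof clarify
  fix x z assume "(x, z) \<in> interval_cover_relation Q"
  then show "(x, z) \<in> gen_transfer Q" unfolding interval_cover_relation_def
  proof (induction x rule: wfp_induct_rule[OF wfp_greater_finite])
    case (1 x)
    then have "x \<le> z" and full: "interval_covers_in Q x z" by simp_all
    show ?case
    proof (cases "x = z")
      case True
      then show ?thesis by (simp add: gen_transfer_refl)
    next
      case False
      then obtain u where xu: "covers x u" and "u \<le> z"
        using finite_covers_above \<open>x \<le> z\<close> by (metis order.not_eq_order_implies_strict)
      then have "x < u" by (simp add: covers_def)
      have "(x, u) \<in> gen_transfer Q"
        using full xu \<open>u \<le> z\<close> subset_gen_transfer by (auto simp: interval_covers_in_def)
      moreover have "(u, z) \<in> gen_transfer Q"
        using "1.IH"[OF \<open>x < u\<close>] interval_covers_in_mono[OF full] \<open>x < u\<close> \<open>u \<le> z\<close> by simp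
      ultimately show ?thesis by (rule gen_transfer_trans)
    qed
  qed
qed

lemma gen_transfer_eq_interval_cover_relation:
  fixes Q :: "('a::{lattice,finite} \<times> 'a) set"
  assumes "modular_lattice TYPE('a)" and "saturated_cover Q"
  shows "gen_transfer Q = interval_cover_relation Q"
  using gen_transfer_least[OF transfer_system_interval_cover_relation[OF assms]
      subset_interval_cover_relation[OF assms(2)]]
    interval_cover_relation_subset_gen_transfer by blast

theorem lemma3p10:
  fixes Q :: "('a::{lattice,finite} \<times> 'a) set" and x y w z :: 'a
  assumes "modular_lattice TYPE('a)"
    and "saturated_cover Q"
    and "x \<le> y" and "y \<le> w" and "w \<le> z"
    and "(x, z) \<in> gen_transfer Q"
  shows "(y, w) \<in> gen_transfer Q"
  using assms interval_covers_in_mono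
  unfolding gen_transfer_eq_interval_cover_relation[OF assms(1,2)] interval_cover_relation_def
  by blast

end
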